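(* Let $d\ge 2$. (a) Let $X_1,\dots,X_M$ with $M>d^2-1$ be an overcomplete frame (spanning set) of $\mathfrak{su}(d)$ and let $W(\vec\theta)=\exp\big(\sum_{j=1}^M\theta_jX_j\big)$ for $\vec\theta\in\mathbb{R}^M$. Then $W$ is not locally surjective, i.e. it has singular points: there exist $\vec\theta$ at which $\mathrm{span}\{W^\dagger(\vec\theta)\partial_{\theta_j}W(\vec\theta)\mid j=1,\dots,M\}\ne\mathfrak{su}(d)$. (b) Let $X_1,\dots,X_{d^2-1}$ be a basis of $\mathfrak{su}(d)$, let $X(\vec\theta)=\sum_{j=1}^{d^2-1}\theta_jX_j$, and for $\vec\theta,\vec\varphi\in\mathbb{R}^{d^2-1}$ let $V(\vec\theta,\vec\varphi)=\exp(X(\vec\theta))\exp(X(\vec\varphi))$. If $\vec\varphi_s$ is a singular point of $\vec\varphi\mapsto\exp(X(\vec\varphi))$, then $(\vec\varphi_s,\vec\varphi_s)$ is a singular point of $V$.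
   Context: $\mathfrak{su}(d)$ is the real Lie algebra of traceless skew-Hermitian $d\times d$ matrices. For a smooth parameterization $U:\mathbb{R}^M\to\mathrm{SU}(d)$, set $\Omega_j(\vec\theta)=U^\dagger(\vec\theta)\frac{\partial}{\partial\theta_j}U(\vec\theta)\in\mathfrak{su}(d)$; a point $\vec\theta$ is a singular point of $U$ if $\mathrm{span}_{\mathbb{R}}\{\Omega_j(\vec\theta)\mid j=1,\dots,M\}\neq\mathfrak{su}(d)$, and $U$ is locally surjective if it has no singular points. *)

theory Defs
  imports "HOL-Analysis.Analysis"
begin

text \<open>d x d complex matrices are modelled as complex^'n^'n with d = CARD('n).
  Matrix product is (**), identity is mat 1.\<close>

fun matpow :: "complex^'n^'n \<Rightarrow> nat \<Rightarrow> complex^'n^'n" where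
  "matpow A 0 = mat 1"
| "matpow A (Suc k) = A ** matpow A k"

definition mexp :: "complex^'n^'n \<Rightarrow> complex^'n^'n" where
  "mexp A = (\<Sum>k. (1 / fact k :: real) *\<^sub>R matpow A k)"

definition dagger :: "complex^'n^'n \<Rightarrow> complex^'n^'n" where
  "dagger A = (\<chi> i j. cnj (A $ j $ i))"

definition mtrace :: "complex^'n^'n \<Rightarrow> complex" where
  "mtrace A = (\<Sum>i\<in>UNIV. A $ i $ i)"

definition su :: "(complex^'n^'n) set" where
  "su = {A. dagger A = - A \<and> mtrace A = 0}"

definition pderiv_param ::
  "(real^'p \<Rightarrow> complex^'n^'n) \<Rightarrow> real^'p \<Rightarrow> 'p \<Rightarrow> complex^'n^'n" where
  "pderiv_param U \<theta> j = vector_derivative (\<lambda>t. U (\<theta> + t *\<^sub>R axis j 1)) (at 0)"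

definition Omega ::
  "(real^'p \<Rightarrow> complex^'n^'n) \<Rightarrow> real^'p \<Rightarrow> 'p \<Rightarrow> complex^'n^'n" where
  "Omega U \<theta> j = dagger (U \<theta>) ** pderiv_param U \<theta> j"

definition singular_point :: "(real^'p \<Rightarrow> complex^'n^'n) \<Rightarrow> real^'p \<Rightarrow> bool" where
  "singular_point U \<theta> \<longleftrightarrow> span (range (Omega U \<theta>)) \<noteq> su"

definition locally_surjective :: "(real^'p \<Rightarrow> complex^'n^'n) \<Rightarrow> bool" where
  "locally_surjective U \<longleftrightarrow> (\<forall>\<theta>. \<not> singular_point U \<theta>)"

definition lincomb :: "('p::finite \<Rightarrow> complex^'n^'n) \<Rightarrow> real^'p \<Rightarrow> complex^'n^'n" where
  "lincomb X \<theta> = (\<Sum>j\<in>UNIV. (\<theta> $ j) *\<^sub>R X j)"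

end

theory Submission
  imports Defs
begin

text \<open>
  At a parameter \<open>\<theta>\<close> the \<open>\<Omega>\<^sub>j\<close> of \<open>\<theta> \<mapsto> exp (\<Sum>\<^sub>j \<theta>\<^sub>j X\<^sub>j)\<close> are
  \<open>E\<^sup>\<dagger> D\<^sub>A(X\<^sub>j)\<close>, where \<open>A = \<Sum>\<^sub>j \<theta>\<^sub>j X\<^sub>j\<close>, \<open>E = exp A\<close> and \<open>D\<^sub>A\<close> is the
  derivative of \<open>exp\<close> at \<open>A\<close>. So their span is \<open>E\<^sup>\<dagger> D\<^sub>A(span {X\<^sub>j})\<close>: it depends on the
  \<open>X\<^sub>j\<close> only through their span, which is why neither the number of generators nor their
  independence plays a role.

  (a) For diagonal \<open>A = diag(a)\<close> the derivative is a divided difference,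
  \<open>(a\<^sub>p - a\<^sub>q) D\<^sub>A(Y)\<^sub>p\<^sub>q = Y\<^sub>p\<^sub>q (e\<^bsup>a\<^sub>p\<^esup> - e\<^bsup>a\<^sub>q\<^esup>)\<close>. Taking \<open>a\<^sub>p = i\<pi>\<close>,
  \<open>a\<^sub>q = -i\<pi>\<close> and all other entries \<open>0\<close> gives a point of \<open>su(d)\<close> at which the \<open>(p,q)\<close>
  entry of every \<open>\<Omega>\<^sub>j\<close> vanishes, while \<open>su(d)\<close> contains a matrix with \<open>(p,q)\<close> entry \<open>1\<close>.

  (b) At \<open>(\<phi>, \<phi>)\<close> the \<open>\<Omega>\<close>'s of \<open>V\<close> are those of \<open>\<phi> \<mapsto> exp (X(\<phi>))\<close> together with their
  conjugates by \<open>E\<close>. As \<open>E\<close> commutes with \<open>A\<close>, \<open>E\<^sup>\<dagger> (E\<^sup>\<dagger> D\<^sub>A(W)) E = E\<^sup>\<dagger> D\<^sub>A(E\<^sup>\<dagger> W E)\<close>,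
  and conjugation by the unitary \<open>E\<close> preserves \<open>su(d)\<close>; so these conjugates add nothing to
  the span.
\<close>

section \<open>Matrix products and adjoints\<close>

lemma bilinear_matrix_mult: "bilinear (\<lambda>(A::complex^'m^'n) (B::complex^'k^'m). A ** B)"
  unfolding bilinear_def
  by (auto intro!: linearI simp: matrix_add_ldistrib matrix_scalar_ac scalar_matrix_assoc vec_eq_iff
      matrix_matrix_mult_def distrib_left distrib_right sum.distrib scaleR_sum_right)

interpretation matrix_mult:
  bounded_bilinear "(**) :: complex^'m^'n \<Rightarrow> complex^'k^'m \<Rightarrow> complex^'k^'n"
  using bilinear_matrix_mult bilinear_conv_bounded_bilinear by blast

lemma matrix_mult_commute_matpow:
  assumes "B ** M = M ** B"
  shows "B ** matpow M k = matpow M k ** B"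
proof (induction k)
  case (Suc k)
  then show ?case
    by (metis assms matrix_mul_assoc matpow.simps(2))
qed simp

lemma bounded_linear_dagger: "bounded_linear (dagger :: complex^'n^'n \<Rightarrow> complex^'n^'n)"
  by (rule linear_conv_bounded_linear[THEN iffD1])
    (auto intro!: linearI simp: dagger_def vec_eq_iff)

lemma dagger_dagger [simp]: "dagger (dagger A) = A"
  by (simp add: dagger_def vec_eq_iff)

lemma dagger_mat_1 [simp]: "dagger (mat 1) = mat 1"
  by (simp add: dagger_def vec_eq_iff mat_def)

lemma dagger_matrix_mult: "dagger (A ** B) = dagger B ** dagger A"
  by (simp add: dagger_def matrix_matrix_mult_def vec_eq_iff mult.commute)

lemma dagger_matpow: "dagger (matpow A k) = matpow (dagger A) k"
  by (induction k) (simp_all add: dagger_matrix_mult matrix_mult_commute_matpow)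

lemma mtrace_matrix_mult_commute: "mtrace (A ** B) = mtrace (B ** A)"
  unfolding mtrace_def matrix_matrix_mult_def
  by (simp, subst sum.swap, simp add: mult.commute)

lemma dagger_mult_mult_in_su:
  assumes "Z \<in> su" and "U ** dagger U = mat 1"
  shows "dagger U ** Z ** U \<in> su"
proof -
  have "dagger (dagger U ** Z ** U) = - (dagger U ** Z ** U)"
    using assms(1) by (simp add: su_def dagger_matrix_mult matrix_mult.minus_left
        matrix_mult.minus_right matrix_mul_assoc)
  moreover have "mtrace (dagger U ** Z ** U) = mtrace Z"
    using mtrace_matrix_mult_commute[of "dagger U ** Z" U] assms(2)
    by (simp add: matrix_mul_assoc)
  ultimately show ?thesis
    using assms(1) by (simp add: su_def)
qed

section \<open>The matrix exponential and its derivative\<close>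

fun matpow_deriv :: "complex^'n^'n \<Rightarrow> complex^'n^'n \<Rightarrow> nat \<Rightarrow> complex^'n^'n" where
  "matpow_deriv M Y 0 = 0"
| "matpow_deriv M Y (Suc k) = Y ** matpow M k + M ** matpow_deriv M Y k"

definition mexp_deriv :: "complex^'n^'n \<Rightarrow> complex^'n^'n \<Rightarrow> complex^'n^'n" where
  "mexp_deriv M Y = (\<Sum>k. (1 / fact k :: real) *\<^sub>R matpow_deriv M Y k)"

lemma norm_matpow_le:
  fixes M :: "complex^'n^'n"
  assumes K: "K \<ge> 0" "\<And>(A::complex^'n^'n) (B::complex^'n^'n). norm (A ** B) \<le> norm A * norm B * K"
    and M: "norm M \<le> R"
  shows "norm (matpow M k) \<le> norm (mat 1 :: complex^'n^'n) * (K * R) ^ k"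
proof (induction k)
  case (Suc k)
  have R: "R \<ge> 0"
    using order_trans[OF norm_ge_zero M] .
  have "norm (matpow M (Suc k)) \<le> norm M * norm (matpow M k) * K"
    using K(2) by simp
  also have "\<dots> \<le> R * (norm (mat 1 :: complex^'n^'n) * (K * R) ^ k) * K"
    using Suc M K(1) R by (intro mult_mono) auto
  finally show ?case
    by (simp add: algebra_simps)
qed simp

lemma norm_matpow_deriv_le:
  fixes M Y :: "complex^'n^'n"
  assumes K: "K \<ge> 0" "\<And>(A::complex^'n^'n) (B::complex^'n^'n). norm (A ** B) \<le> norm A * norm B * K"
    and M: "norm M \<le> R" and Y: "norm Y \<le> R"
  shows "norm (matpow_deriv M Y k) \<le> real k * norm (mat 1 :: complex^'n^'n) * (K * R) ^ k"
proof (induction k)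
  case (Suc k)
  let ?I = "norm (mat 1 :: complex^'n^'n)"
  have R: "R \<ge> 0"
    using order_trans[OF norm_ge_zero M] .
  have "norm (Y ** matpow M k) \<le> norm Y * norm (matpow M k) * K"
    using K(2) .
  also have "\<dots> \<le> R * (?I * (K * R) ^ k) * K"
    using norm_matpow_le[OF K M] Y K(1) R by (intro mult_mono) auto
  finally have "norm (Y ** matpow M k) \<le> ?I * (K * R) ^ Suc k"
    by (simp add: algebra_simps)
  moreover have "norm (M ** matpow_deriv M Y k) \<le> norm M * norm (matpow_deriv M Y k) * K"
    using K(2) .
  moreover have "\<dots> \<le> R * (real k * ?I * (K * R) ^ k) * K"
    using Suc M K(1) R by (intro mult_mono) auto
  ultimately show ?case
    using norm_triangle_ineq[of "Y ** matpow M k" "M ** matpow_deriv M Y k"]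
    by (simp add: algebra_simps)
qed simp

lemma summable_of_nat_mult_exp_series: "summable (\<lambda>k. real k * x ^ k / fact k)"
proof -
  have "summable (\<lambda>m. x * (inverse (fact m) * x ^ m))"
    by (intro summable_mult summable_exp)
  moreover have "real (Suc m) * x ^ Suc m / fact (Suc m) = x * (inverse (fact m) * x ^ m)" for m
    by (simp add: field_simps del: of_nat_Suc)
  ultimately have "summable (\<lambda>m. real (Suc m) * x ^ Suc m / fact (Suc m))"
    by simp
  then show ?thesis
    by (rule summable_Suc_iff[THEN iffD1])
qed

lemma summable_mexp: "summable (\<lambda>k. (1 / fact k :: real) *\<^sub>R matpow (M::complex^'n^'n) k)"
proof -
  obtain K where K: "K \<ge> 0"
    "\<And>(A::complex^'n^'n) (B::complex^'n^'n). norm (A ** B) \<le> norm A * norm B * K"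
    using matrix_mult.nonneg_bounded by blast
  show ?thesis
  proof (rule summable_comparison_test')
    show "summable (\<lambda>k. norm (mat 1 :: complex^'n^'n) * (inverse (fact k) * (K * norm M) ^ k))"
      by (intro summable_mult summable_exp)
    show "norm ((1 / fact k :: real) *\<^sub>R matpow M k)
        \<le> norm (mat 1 :: complex^'n^'n) * (inverse (fact k) * (K * norm M) ^ k)" for k
      using norm_matpow_le[OF K order_refl, of M k] by (simp add: field_simps)
  qed
qed

lemma summable_mexp_deriv:
  "summable (\<lambda>k. (1 / fact k :: real) *\<^sub>R matpow_deriv (M::complex^'n^'n) Y k)"
proof -
  obtain K where K: "K \<ge> 0"
    "\<And>(A::complex^'n^'n) (B::complex^'n^'n). norm (A ** B) \<le> norm A * norm B * K"
    using matrix_mult.nonneg_bounded by blast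
  define R where "R = norm M + norm Y"
  show ?thesis
  proof (rule summable_comparison_test')
    show "summable (\<lambda>k. norm (mat 1 :: complex^'n^'n) * (real k * (K * R) ^ k / fact k))"
      by (intro summable_mult summable_of_nat_mult_exp_series)
    show "norm ((1 / fact k :: real) *\<^sub>R matpow_deriv M Y k)
        \<le> norm (mat 1 :: complex^'n^'n) * (real k * (K * R) ^ k / fact k)" for k
      using norm_matpow_deriv_le[OF K, of M R Y k] by (simp add: R_def field_simps)
  qed
qed

lemma has_vector_derivative_matpow_line:
  "((\<lambda>t. matpow (A + t *\<^sub>R Y) k) has_vector_derivative matpow_deriv (A + t *\<^sub>R Y) Y k) (at t)"
proof (induction k)
  case (Suc k)
  have "((\<lambda>t. A + t *\<^sub>R Y) has_vector_derivative Y) (at t)"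
    by (auto intro!: derivative_eq_intros)
  from matrix_mult.has_vector_derivative[OF this Suc]
  show ?case
    by (simp add: add.commute)
qed simp

lemma has_vector_derivative_series:
  fixes f f' :: "nat \<Rightarrow> real \<Rightarrow> 'a::banach"
  assumes S: "convex S" "open S"
    and f': "\<And>n x. x \<in> S \<Longrightarrow> (f n has_vector_derivative f' n x) (at x)"
    and g': "uniform_limit S (\<lambda>n x. \<Sum>i<n. f' i x) g' sequentially"
    and summable: "\<And>x. x \<in> S \<Longrightarrow> summable (\<lambda>n. f n x)"
    and x: "x \<in> S"
  shows "((\<lambda>x. \<Sum>n. f n x) has_vector_derivative g' x) (at x)"
proof -
  have "\<exists>g. \<forall>x\<in>S. (\<lambda>n. f n x) sums g x \<and> (g has_derivative (\<lambda>h. h *\<^sub>R g' x)) (at x within S)"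
  proof (rule has_derivative_series[OF S(1)])
    show "((f n) has_derivative (\<lambda>h. h *\<^sub>R f' n x)) (at x within S)" if "x \<in> S" for n x
      using f'[OF that] by (simp add: has_vector_derivative_def has_derivative_at_withinI)
    show "\<forall>\<^sub>F n in sequentially. \<forall>x\<in>S. \<forall>h.
        norm ((\<Sum>i<n. h *\<^sub>R f' i x) - h *\<^sub>R g' x) \<le> e * norm h" if "e > 0" for e
      using uniform_limitD[OF g' \<open>e > 0\<close>]
    proof eventually_elim
      case (elim n)
      show ?case
      proof (intro ballI allI)
        fix x h assume "x \<in> S"
        have "norm ((\<Sum>i<n. h *\<^sub>R f' i x) - h *\<^sub>R g' x) = \<bar>h\<bar> * dist (\<Sum>i<n. f' i x) (g' x)"
          by (simp add: dist_norm flip: scaleR_sum_right scaleR_diff_right)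
        also have "\<dots> \<le> \<bar>h\<bar> * e"
          using elim \<open>x \<in> S\<close> by (intro mult_left_mono) (auto simp: dist_commute)
        finally show "norm ((\<Sum>i<n. h *\<^sub>R f' i x) - h *\<^sub>R g' x) \<le> e * norm h"
          by (simp add: mult.commute)
      qed
    qed
  qed (use x summable in \<open>auto intro: summable_sums\<close>)
  then obtain g where g: "\<And>x. x \<in> S \<Longrightarrow> (\<lambda>n. f n x) sums g x"
      "\<And>x. x \<in> S \<Longrightarrow> (g has_vector_derivative g' x) (at x within S)"
    by (auto simp: has_vector_derivative_def)
  have "(g has_vector_derivative g' x) (at x)"
    using g(2)[OF x] has_vector_derivative_within_open[OF x S(2)] by blast
  then show ?thesis
    by (rule has_vector_derivative_transform_within_open[OF _ S(2) x])
      (use g(1) in \<open>simp add: sums_iff\<close>)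
qed

lemma has_vector_derivative_mexp_line:
  fixes A Y :: "complex^'n^'n"
  shows "((\<lambda>t. mexp (A + t *\<^sub>R Y)) has_vector_derivative mexp_deriv (A + t *\<^sub>R Y) Y) (at t)"
proof -
  obtain K where K: "K \<ge> 0"
    "\<And>(A::complex^'n^'n) (B::complex^'n^'n). norm (A ** B) \<le> norm A * norm B * K"
    using matrix_mult.nonneg_bounded by blast
  define R where "R = norm A + (\<bar>t\<bar> + 1) * norm Y"
  have norm_line: "norm (A + s *\<^sub>R Y) \<le> R" if "s \<in> ball t 1" for s
  proof -
    have "\<bar>s\<bar> * norm Y \<le> (\<bar>t\<bar> + 1) * norm Y"
      using that by (intro mult_right_mono) (auto simp: dist_real_def)
    then show ?thesis
      using norm_triangle_ineq[of A "s *\<^sub>R Y"] by (simp add: R_def)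
  qed
  have norm_Y: "norm Y \<le> R"
    by (simp add: R_def distrib_right)
  have "uniform_limit (ball t 1)
      (\<lambda>n s. \<Sum>i<n. (1 / fact i :: real) *\<^sub>R matpow_deriv (A + s *\<^sub>R Y) Y i)
      (\<lambda>s. mexp_deriv (A + s *\<^sub>R Y) Y) sequentially"
    unfolding mexp_deriv_def
  proof (rule Weierstrass_m_test)
    show "summable (\<lambda>k. norm (mat 1 :: complex^'n^'n) * (real k * (K * R) ^ k / fact k))"
      by (intro summable_mult summable_of_nat_mult_exp_series)
    show "norm ((1 / fact k :: real) *\<^sub>R matpow_deriv (A + s *\<^sub>R Y) Y k)
        \<le> norm (mat 1 :: complex^'n^'n) * (real k * (K * R) ^ k / fact k)" if "s \<in> ball t 1" for k s
      using norm_matpow_deriv_le[OF K norm_line[OF that] norm_Y, of k] by (simp add: field_simps)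
  qed
  moreover have "((\<lambda>s. (1 / fact n :: real) *\<^sub>R matpow (A + s *\<^sub>R Y) n) has_vector_derivative
      (1 / fact n :: real) *\<^sub>R matpow_deriv (A + s *\<^sub>R Y) Y n) (at s)" for n s
    by (rule bounded_linear.has_vector_derivative[OF bounded_linear_scaleR_right
          has_vector_derivative_matpow_line])
  ultimately show ?thesis
    unfolding mexp_def
    by (intro has_vector_derivative_series[OF convex_ball open_ball _ _ summable_mexp]) auto
qed

lemma mexp_zero [simp]: "mexp 0 = mat 1"
proof -
  have "(\<lambda>k. (1 / fact k :: real) *\<^sub>R matpow (0::complex^'n^'n) k)
      = (\<lambda>k. if k = 0 then mat 1 else 0)"
    by (auto simp: fun_eq_iff gr0_conv_Suc)
  then show ?thesis
    unfolding mexp_def \<open>_ = _\<close> using sums_single[of 0 "\<lambda>_. mat 1 :: complex^'n^'n"]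
    by (simp add: sums_iff)
qed

lemma matrix_mult_commute_mexp:
  assumes "B ** M = M ** B"
  shows "B ** mexp M = mexp M ** B"
proof -
  have "B ** mexp M = (\<Sum>k. B ** ((1 / fact k :: real) *\<^sub>R matpow M k))"
    unfolding mexp_def
    by (rule bounded_linear.suminf[OF matrix_mult.bounded_linear_right summable_mexp])
  also have "\<dots> = (\<Sum>k. ((1 / fact k :: real) *\<^sub>R matpow M k) ** B)"
    by (simp add: matrix_mult.scaleR_left matrix_mult.scaleR_right
        matrix_mult_commute_matpow[OF assms])
  also have "\<dots> = mexp M ** B"
    unfolding mexp_def
    by (rule bounded_linear.suminf[OF matrix_mult.bounded_linear_left summable_mexp, symmetric])
  finally show ?thesis .
qed

lemma dagger_mexp: "dagger (mexp A) = mexp (dagger A)"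
  unfolding mexp_def
  by (simp add: bounded_linear.suminf[OF bounded_linear_dagger summable_mexp]
      linear_scale[OF bounded_linear.linear[OF bounded_linear_dagger]] dagger_matpow)

lemma matpow_deriv_commuting:
  assumes "Y ** M = M ** Y"
  shows "matpow_deriv M Y (Suc k) = of_nat (Suc k) *\<^sub>R (Y ** matpow M k)"
proof (induction k)
  case (Suc k)
  have "M ** (Y ** matpow M k) = Y ** matpow M (Suc k)"
    by (simp add: matrix_mul_assoc assms)
  then have "matpow_deriv M Y (Suc (Suc k))
      = Y ** matpow M (Suc k) + of_nat (Suc k) *\<^sub>R (Y ** matpow M (Suc k))"
    by (simp only: matpow_deriv.simps(2)[of _ _ "Suc k"] Suc matrix_mult.scaleR_right)
  then show ?case
    by (simp only: of_nat_Suc[of "Suc k"] scaleR_add_left scaleR_one add.commute)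
qed simp

lemma mexp_deriv_commuting:
  assumes "Y ** M = M ** Y"
  shows "mexp_deriv M Y = Y ** mexp M"
proof -
  have "mexp_deriv M Y = (\<Sum>k. (1 / fact (Suc k) :: real) *\<^sub>R matpow_deriv M Y (Suc k))"
    unfolding mexp_deriv_def using suminf_split_head[OF summable_mexp_deriv, of M Y] by simp
  also have "\<dots> = (\<Sum>k. Y ** ((1 / fact k :: real) *\<^sub>R matpow M k))"
  proof (rule arg_cong[where f = suminf], rule ext)
    fix k
    have "(1 / fact (Suc k) :: real) *\<^sub>R matpow_deriv M Y (Suc k)
        = ((1 / fact (Suc k)) * of_nat (Suc k)) *\<^sub>R (Y ** matpow M k)"
      by (simp only: matpow_deriv_commuting[OF assms] scaleR_scaleR)
    also have "(1 / fact (Suc k)) * of_nat (Suc k) = (1 / fact k :: real)"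
      by (simp add: fact_Suc del: of_nat_Suc)
    finally show "(1 / fact (Suc k) :: real) *\<^sub>R matpow_deriv M Y (Suc k)
        = Y ** ((1 / fact k :: real) *\<^sub>R matpow M k)"
      by (simp add: matrix_mult.scaleR_right)
  qed
  also have "\<dots> = Y ** mexp M"
    unfolding mexp_def
    by (rule bounded_linear.suminf[OF matrix_mult.bounded_linear_right summable_mexp, symmetric])
  finally show ?thesis .
qed

lemma has_vector_derivative_mexp_scaleR:
  "((\<lambda>s. mexp (s *\<^sub>R A)) has_vector_derivative A ** mexp (s *\<^sub>R A)) (at s)"
proof -
  have "mexp_deriv (s *\<^sub>R A) A = A ** mexp (s *\<^sub>R A)"
    by (rule mexp_deriv_commuting) (simp add: matrix_mult.scaleR_left matrix_mult.scaleR_right)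
  then show ?thesis
    using has_vector_derivative_mexp_line[of 0 A s] by simp
qed

lemma mexp_neg_mult_mexp: "mexp (- A) ** mexp A = mat 1"
proof -
  define g where "g s = mexp (s *\<^sub>R (- A)) ** mexp (s *\<^sub>R A)" for s :: real
  have deriv: "(g has_vector_derivative 0) (at s within UNIV)" for s
  proof -
    let ?P = "mexp (s *\<^sub>R (- A))" and ?Q = "mexp (s *\<^sub>R A)"
    have "(g has_vector_derivative ?P ** (A ** ?Q) + ((- A) ** ?P) ** ?Q) (at s)"
      unfolding g_def
      by (rule matrix_mult.has_vector_derivative[OF has_vector_derivative_mexp_scaleR
            has_vector_derivative_mexp_scaleR])
    moreover have "A ** ?P = ?P ** A"
      by (rule matrix_mult_commute_mexp)
        (simp add: matrix_mult.scaleR_left matrix_mult.scaleR_right matrix_mult.minus_left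
          matrix_mult.minus_right)
    then have "?P ** (A ** ?Q) + ((- A) ** ?P) ** ?Q = 0"
      by (simp only: matrix_mult.minus_left matrix_mul_assoc) simp
    ultimately show ?thesis
      by simp
  qed
  obtain c where "\<And>s. s \<in> UNIV \<Longrightarrow> g s = c"
    using has_vector_derivative_zero_constant[OF convex_UNIV deriv] by blast
  then have "g 1 = g 0"
    by simp
  then show ?thesis
    by (simp add: g_def)
qed

lemma unitary_mexp:
  assumes "dagger A = - A"
  shows "dagger (mexp A) ** mexp A = mat 1" and "mexp A ** dagger (mexp A) = mat 1"
  using mexp_neg_mult_mexp[of A] mexp_neg_mult_mexp[of "- A"] by (simp_all add: dagger_mexp assms)

lemma linear_matpow_deriv: "linear (\<lambda>Y. matpow_deriv M Y k)"
  by (induction k) (auto simp: linear_iff matrix_mult.add_left matrix_mult.scaleR_left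
      matrix_mult.add_right matrix_mult.scaleR_right scaleR_add_right)

lemma linear_mexp_deriv: "linear (mexp_deriv (M::complex^'n^'n))"
proof (rule linearI)
  fix Y Z :: "complex^'n^'n" and c :: real
  show "mexp_deriv M (Y + Z) = mexp_deriv M Y + mexp_deriv M Z"
    unfolding mexp_deriv_def linear_add[OF linear_matpow_deriv] scaleR_add_right
    by (rule suminf_add[OF summable_mexp_deriv summable_mexp_deriv, symmetric])
  show "mexp_deriv M (c *\<^sub>R Y) = c *\<^sub>R mexp_deriv M Y"
    unfolding mexp_deriv_def linear_scale[OF linear_matpow_deriv] scaleR_scaleR
    using suminf_scaleR_right[OF summable_mexp_deriv, of c M Y]
    by (simp add: scaleR_scaleR mult.commute)
qed

lemma mult_matpow_deriv_mult:
  fixes M P Q Y :: "complex^'n^'n"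
  assumes "P ** M = M ** P" and "Q ** M = M ** Q"
  shows "P ** matpow_deriv M Y k ** Q = matpow_deriv M (P ** Y ** Q) k"
proof (induction k)
  case (Suc k)
  have "P ** matpow_deriv M Y (Suc k) ** Q
      = P ** Y ** (matpow M k ** Q) + M ** (P ** matpow_deriv M Y k ** Q)"
    by (simp add: matrix_mult.add_left matrix_mult.add_right matrix_mul_assoc assms(1))
  also have "\<dots> = matpow_deriv M (P ** Y ** Q) (Suc k)"
    by (simp add: Suc matrix_mult_commute_matpow[OF assms(2), symmetric] matrix_mul_assoc)
  finally show ?case .
qed simp

lemma mult_mexp_deriv_mult:
  fixes M P Q Y :: "complex^'n^'n"
  assumes "P ** M = M ** P" and "Q ** M = M ** Q"
  shows "P ** mexp_deriv M Y ** Q = mexp_deriv M (P ** Y ** Q)"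
proof -
  have "bounded_linear (\<lambda>Z. P ** Z ** Q)"
    by (rule bounded_linear_compose[OF matrix_mult.bounded_linear_left
          matrix_mult.bounded_linear_right])
  then have "P ** mexp_deriv M Y ** Q
      = (\<Sum>k. P ** ((1 / fact k :: real) *\<^sub>R matpow_deriv M Y k) ** Q)"
    unfolding mexp_deriv_def by (rule bounded_linear.suminf[OF _ summable_mexp_deriv])
  also have "\<dots> = mexp_deriv M (P ** Y ** Q)"
    unfolding mexp_deriv_def
    by (simp add: matrix_mult.scaleR_left matrix_mult.scaleR_right mult_matpow_deriv_mult[OF assms])
  finally show ?thesis .
qed

section \<open>Diagonal matrices\<close>

definition diag_mat :: "('n \<Rightarrow> complex) \<Rightarrow> complex^'n^'n" where
  "diag_mat a = (\<chi> i j. if i = j then a i else 0)"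

lemma diag_mat_nth [simp]: "diag_mat a $ i $ j = (if i = j then a i else 0)"
  by (simp add: diag_mat_def)

lemma diag_mat_mult_nth: "(diag_mat a ** Y) $ i $ j = a i * Y $ i $ j"
  unfolding matrix_matrix_mult_def diag_mat_def by (simp add: if_distrib if_distribR cong: if_cong)

lemma mult_diag_mat_nth: "(Y ** diag_mat a) $ i $ j = Y $ i $ j * a j"
  unfolding matrix_matrix_mult_def diag_mat_def by (simp add: if_distrib if_distribR cong: if_cong)

lemma dagger_diag_mat: "dagger (diag_mat a) = diag_mat (\<lambda>i. cnj (a i))"
  by (simp add: dagger_def vec_eq_iff)

lemma diag_mat_mult_diag_mat: "diag_mat a ** diag_mat b = diag_mat (\<lambda>i. a i * b i)"
  by (simp add: vec_eq_iff diag_mat_mult_nth)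

lemma matpow_diag_mat: "matpow (diag_mat a) k = diag_mat (\<lambda>i. a i ^ k)"
proof (induction k)
  case 0
  then show ?case
    by (simp add: vec_eq_iff mat_def)
qed (simp add: diag_mat_mult_diag_mat)

lemma bounded_linear_matrix_nth: "bounded_linear (\<lambda>M::complex^'m^'n. M $ i $ j)"
  by (rule bounded_linear_compose[OF bounded_linear_vec_nth bounded_linear_vec_nth])

lemma mexp_diag_mat: "mexp (diag_mat a) = diag_mat (\<lambda>i. exp (a i))"
proof -
  have "mexp (diag_mat a) $ i $ j
      = (\<Sum>k. (1 / fact k :: real) *\<^sub>R (if i = j then a i ^ k else 0))" for i j
    unfolding mexp_def bounded_linear.suminf[OF bounded_linear_matrix_nth summable_mexp]
    by (simp add: matpow_diag_mat)
  then show ?thesis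
    by (auto simp: vec_eq_iff exp_def divide_inverse)
qed

lemma matpow_deriv_diag_mat_nth:
  "(a p - a q) * matpow_deriv (diag_mat a) Y k $ p $ q = Y $ p $ q * (a p ^ k - a q ^ k)"
proof (induction k)
  case (Suc k)
  have "(a p - a q) * matpow_deriv (diag_mat a) Y (Suc k) $ p $ q
      = (a p - a q) * (Y $ p $ q * a q ^ k)
        + a p * ((a p - a q) * matpow_deriv (diag_mat a) Y k $ p $ q)"
    by (simp add: matpow_diag_mat diag_mat_mult_nth mult_diag_mat_nth algebra_simps)
  also have "\<dots> = Y $ p $ q * (a p ^ Suc k - a q ^ Suc k)"
    by (simp only: Suc) (simp add: algebra_simps)
  finally show ?case .
qed simp

lemma mexp_deriv_diag_mat_nth:
  "(a p - a q) * mexp_deriv (diag_mat a) Y $ p $ q = Y $ p $ q * (exp (a p) - exp (a q))"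
proof -
  have "(a p - a q) * mexp_deriv (diag_mat a) Y $ p $ q
      = (a p - a q) * (\<Sum>k. (1 / fact k :: real) *\<^sub>R matpow_deriv (diag_mat a) Y k $ p $ q)"
    unfolding mexp_deriv_def
    by (simp add: bounded_linear.suminf[OF bounded_linear_matrix_nth summable_mexp_deriv])
  also have "\<dots>
      = (\<Sum>k. (a p - a q) * ((1 / fact k :: real) *\<^sub>R matpow_deriv (diag_mat a) Y k $ p $ q))"
    by (rule suminf_mult[symmetric])
      (use bounded_linear.summable[OF bounded_linear_matrix_nth summable_mexp_deriv] in simp)
  also have "\<dots> = (\<Sum>k. Y $ p $ q * (a p ^ k /\<^sub>R fact k - a q ^ k /\<^sub>R fact k))"
    by (simp only: mult_scaleR_right matpow_deriv_diag_mat_nth)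
      (simp add: scaleR_conv_of_real algebra_simps divide_inverse)
  also have "\<dots> = Y $ p $ q * (exp (a p) - exp (a q))"
    using summable_exp_generic[of "a p"] summable_exp_generic[of "a q"]
    by (simp add: suminf_mult summable_diff suminf_diff exp_def)
  finally show ?thesis .
qed

section \<open>Singular points of exponential parameterizations\<close>

lemma linear_lincomb: "linear (lincomb X)"
  by (rule linearI) (simp_all add: lincomb_def scaleR_add_left sum.distrib scaleR_sum_right)

lemma lincomb_axis: "lincomb X (axis j 1) = X j"
proof -
  have "lincomb X (axis j 1) = (\<Sum>i\<in>UNIV. if i = j then X j else 0)"
    unfolding lincomb_def by (intro sum.cong) (auto simp: axis_def)
  then show ?thesis
    by simp
qed

lemma lincomb_add_axis: "lincomb X (\<theta> + t *\<^sub>R axis j 1) = lincomb X \<theta> + t *\<^sub>R X j"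
  by (simp add: linear_add[OF linear_lincomb] linear_scale[OF linear_lincomb] lincomb_axis)

lemma range_lincomb: "range (lincomb X) = span (range X)"
proof
  have "lincomb X \<theta> \<in> span (range X)" for \<theta>
    unfolding lincomb_def by (intro span_sum span_scale span_base) auto
  then show "range (lincomb X) \<subseteq> span (range X)"
    by blast
  have "range X \<subseteq> range (lincomb X)"
    by (metis lincomb_axis image_subsetI rangeI)
  then show "span (range X) \<subseteq> range (lincomb X)"
    by (rule span_minimal) (rule linear_subspace_image[OF linear_lincomb subspace_UNIV])
qed

lemma has_vector_derivative_mexp_lincomb_axis:
  "((\<lambda>t. mexp (lincomb X (\<theta> + t *\<^sub>R axis j 1)))
      has_vector_derivative mexp_deriv (lincomb X \<theta>) (X j)) (at 0)"
  using has_vector_derivative_mexp_line[of "lincomb X \<theta>" "X j" 0] by (simp add: lincomb_add_axis)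

lemma Omega_mexp_lincomb:
  "Omega (\<lambda>\<theta>. mexp (lincomb X \<theta>)) \<theta> j
    = dagger (mexp (lincomb X \<theta>)) ** mexp_deriv (lincomb X \<theta>) (X j)"
  unfolding Omega_def pderiv_param_def
  by (simp add: vector_derivative_at[OF has_vector_derivative_mexp_lincomb_axis])

lemma span_Omega_mexp_lincomb:
  "span (range (Omega (\<lambda>\<theta>. mexp (lincomb X \<theta>)) \<theta>))
    = (\<lambda>Z. dagger (mexp (lincomb X \<theta>)) ** mexp_deriv (lincomb X \<theta>) Z) ` span (range X)"
proof -
  let ?L = "\<lambda>Z. dagger (mexp (lincomb X \<theta>)) ** mexp_deriv (lincomb X \<theta>) Z"
  have "linear ?L"
    using linear_compose[OF linear_mexp_deriv
        bounded_linear.linear[OF matrix_mult.bounded_linear_right]]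
    by (simp add: o_def)
  moreover have "range (Omega (\<lambda>\<theta>. mexp (lincomb X \<theta>)) \<theta>) = ?L ` range X"
    by (auto simp: Omega_mexp_lincomb)
  ultimately show ?thesis
    by (simp add: linear_span_image)
qed

lemma singular_point_if_entry_eq_0:
  fixes U :: "real^'p \<Rightarrow> complex^'n^'n"
  assumes "p \<noteq> q" and "\<And>j. Omega U \<theta> j $ p $ q = 0"
  shows "singular_point U \<theta>"
proof -
  define Z :: "complex^'n^'n"
    where "Z = (\<chi> i j. if i = p \<and> j = q then 1 else if i = q \<and> j = p then -1 else 0)"
  have "Z \<in> su"
    using \<open>p \<noteq> q\<close> by (auto simp: su_def Z_def dagger_def mtrace_def vec_eq_iff intro!: sum.neutral)
  have "span (range (Omega U \<theta>)) \<subseteq> {M. M $ p $ q = 0}"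
    by (rule span_minimal) (auto simp: assms(2) subspace_def)
  moreover have "Z $ p $ q = 1"
    using \<open>p \<noteq> q\<close> by (simp add: Z_def)
  ultimately show ?thesis
    using \<open>Z \<in> su\<close> unfolding singular_point_def by force
qed

lemma exists_singular_point_mexp_lincomb:
  fixes X :: "'m::finite \<Rightarrow> complex^'n::finite^'n"
  assumes "CARD('n) \<ge> 2" and "span (range X) = su"
  shows "\<exists>\<theta>. singular_point (\<lambda>\<theta>. mexp (lincomb X \<theta>)) \<theta>"
proof -
  obtain p q :: 'n where "p \<noteq> q"
    using assms(1) card_le_Suc0_iff_eq[of "UNIV :: 'n set"] by fastforce
  define a where "a i = (if i = p then \<i> * pi else if i = q then - (\<i> * pi) else 0)" for i
  have "diag_mat a \<in> su"
    using \<open>p \<noteq> q\<close> by (simp add: su_def dagger_diag_mat mtrace_def vec_eq_iff a_def sum.If_cases)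
  then have "diag_mat a \<in> range (lincomb X)"
    by (simp add: range_lincomb assms(2))
  then obtain \<theta> where \<theta>: "lincomb X \<theta> = diag_mat a"
    by (metis rangeE)
  have "a p \<noteq> a q" and "exp (a p) = exp (a q)"
    using \<open>p \<noteq> q\<close> by (simp_all add: a_def exp_minus)
  then have "mexp_deriv (diag_mat a) Y $ p $ q = 0" for Y
    using mexp_deriv_diag_mat_nth[of a p q Y] by simp
  then have "Omega (\<lambda>\<theta>. mexp (lincomb X \<theta>)) \<theta> j $ p $ q = 0" for j
    by (simp add: Omega_mexp_lincomb \<theta> mexp_diag_mat dagger_diag_mat diag_mat_mult_nth)
  then show ?thesis
    using singular_point_if_entry_eq_0[OF \<open>p \<noteq> q\<close>] by blast
qed

lemma Omega_product_Inl:
  fixes U :: "real^'p \<Rightarrow> complex^'n^'n" and W :: "real^'q \<Rightarrow> complex^'n^'n"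
  assumes "(\<lambda>t. U ((\<chi> i. v $ Inl i) + t *\<^sub>R axis a 1)) differentiable (at 0)"
  shows "Omega (\<lambda>v. U (\<chi> i. v $ Inl i) ** W (\<chi> i. v $ Inr i)) v (Inl a)
    = dagger (W (\<chi> i. v $ Inr i)) ** Omega U (\<chi> i. v $ Inl i) a ** W (\<chi> i. v $ Inr i)"
proof -
  have "(\<chi> i. (v + t *\<^sub>R axis (Inl a) 1) $ Inl i) = (\<chi> i. v $ Inl i) + t *\<^sub>R axis a 1"
    and "(\<chi> i. (v + t *\<^sub>R axis (Inl a) 1) $ Inr i) = (\<chi> i. v $ Inr i)" for t
    by (simp_all add: vec_eq_iff axis_def)
  moreover have "((\<lambda>t. U ((\<chi> i. v $ Inl i) + t *\<^sub>R axis a 1) ** W (\<chi> i. v $ Inr i))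
      has_vector_derivative pderiv_param U (\<chi> i. v $ Inl i) a ** W (\<chi> i. v $ Inr i)) (at 0)"
    using matrix_mult.has_vector_derivative[OF assms[unfolded vector_derivative_works]
        has_vector_derivative_const]
    by (simp add: pderiv_param_def)
  ultimately have "pderiv_param (\<lambda>v. U (\<chi> i. v $ Inl i) ** W (\<chi> i. v $ Inr i)) v (Inl a)
      = pderiv_param U (\<chi> i. v $ Inl i) a ** W (\<chi> i. v $ Inr i)"
    unfolding pderiv_param_def by (simp add: vector_derivative_at)
  then show ?thesis
    by (simp add: Omega_def dagger_matrix_mult matrix_mul_assoc)
qed

lemma Omega_product_Inr:
  fixes U :: "real^'p \<Rightarrow> complex^'n^'n" and W :: "real^'q \<Rightarrow> complex^'n^'n"
  assumes "(\<lambda>t. W ((\<chi> i. v $ Inr i) + t *\<^sub>R axis a 1)) differentiable (at 0)"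
    and "dagger (U (\<chi> i. v $ Inl i)) ** U (\<chi> i. v $ Inl i) = mat 1"
  shows "Omega (\<lambda>v. U (\<chi> i. v $ Inl i) ** W (\<chi> i. v $ Inr i)) v (Inr a)
    = Omega W (\<chi> i. v $ Inr i) a"
proof -
  have "(\<chi> i. (v + t *\<^sub>R axis (Inr a) 1) $ Inl i) = (\<chi> i. v $ Inl i)"
    and "(\<chi> i. (v + t *\<^sub>R axis (Inr a) 1) $ Inr i) = (\<chi> i. v $ Inr i) + t *\<^sub>R axis a 1" for t
    by (simp_all add: vec_eq_iff axis_def)
  moreover have "((\<lambda>t. U (\<chi> i. v $ Inl i) ** W ((\<chi> i. v $ Inr i) + t *\<^sub>R axis a 1))
      has_vector_derivative U (\<chi> i. v $ Inl i) ** pderiv_param W (\<chi> i. v $ Inr i) a) (at 0)"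
    using matrix_mult.has_vector_derivative[OF has_vector_derivative_const
        assms(1)[unfolded vector_derivative_works]]
    by (simp add: pderiv_param_def)
  ultimately have "pderiv_param (\<lambda>v. U (\<chi> i. v $ Inl i) ** W (\<chi> i. v $ Inr i)) v (Inr a)
      = U (\<chi> i. v $ Inl i) ** pderiv_param W (\<chi> i. v $ Inr i) a"
    unfolding pderiv_param_def by (simp add: vector_derivative_at)
  then have "Omega (\<lambda>v. U (\<chi> i. v $ Inl i) ** W (\<chi> i. v $ Inr i)) v (Inr a)
      = dagger (W (\<chi> i. v $ Inr i)) ** (dagger (U (\<chi> i. v $ Inl i)) ** U (\<chi> i. v $ Inl i))
        ** pderiv_param W (\<chi> i. v $ Inr i) a"
    by (simp add: Omega_def dagger_matrix_mult matrix_mul_assoc)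
  then show ?thesis
    by (simp add: assms(2) Omega_def)
qed

lemma conj_in_span_Omega_mexp_lincomb:
  fixes Y :: "'k::finite \<Rightarrow> complex^'n^'n" and \<phi> :: "real^'k"
  defines "E \<equiv> mexp (lincomb Y \<phi>)"
  assumes span: "span (range Y) = su"
    and Z: "Z \<in> span (range (Omega (\<lambda>\<phi>. mexp (lincomb Y \<phi>)) \<phi>))"
  shows "dagger E ** Z ** E \<in> span (range (Omega (\<lambda>\<phi>. mexp (lincomb Y \<phi>)) \<phi>))"
proof -
  define A where "A = lincomb Y \<phi>"
  have "A \<in> su"
    using span range_lincomb[of Y] by (auto simp: A_def)
  then have skew: "dagger A = - A"
    by (simp add: su_def)
  have E: "E = mexp A"
    by (simp add: E_def A_def)
  have commute: "dagger E ** A = A ** dagger E" "E ** A = A ** E"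
    using matrix_mult_commute_mexp[of A "- A", symmetric]
      matrix_mult_commute_mexp[of A A, symmetric]
    by (simp_all add: E dagger_mexp skew matrix_mult.minus_left matrix_mult.minus_right)
  have span_Omega: "span (range (Omega (\<lambda>\<phi>. mexp (lincomb Y \<phi>)) \<phi>))
      = (\<lambda>W. dagger E ** mexp_deriv A W) ` su"
    using span_Omega_mexp_lincomb[of Y \<phi>] span by (simp add: E A_def)
  then obtain W where "W \<in> su" and W: "Z = dagger E ** mexp_deriv A W"
    using Z by blast
  have "dagger E ** Z ** E = dagger E ** mexp_deriv A (dagger E ** W ** E)"
    by (simp add: W matrix_mul_assoc flip: mult_mexp_deriv_mult[OF commute])
  moreover have "dagger E ** W ** E \<in> su"
    using dagger_mult_mult_in_su[OF \<open>W \<in> su\<close>] unitary_mexp(2)[OF skew] by (simp add: E)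
  ultimately show ?thesis
    using span_Omega by simp
qed

lemma singular_point_mexp_lincomb_product:
  fixes Y :: "'k::finite \<Rightarrow> complex^'n^'n"
  assumes span: "span (range Y) = su" and singular: "singular_point (\<lambda>\<phi>. mexp (lincomb Y \<phi>)) \<phi>s"
  shows "singular_point
      (\<lambda>v::real^('k + 'k). mexp (lincomb Y (\<chi> i. v $ Inl i)) ** mexp (lincomb Y (\<chi> i. v $ Inr i)))
      (\<chi> i. case i of Inl a \<Rightarrow> \<phi>s $ a | Inr a \<Rightarrow> \<phi>s $ a)"
    (is "singular_point ?V ?v")
proof -
  let ?U = "\<lambda>\<phi>. mexp (lincomb Y \<phi>)"
  have v: "(\<chi> i. ?v $ Inl i) = \<phi>s" "(\<chi> i. ?v $ Inr i) = \<phi>s"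
    by (simp_all add: vec_eq_iff)
  have differentiable: "(\<lambda>t. ?U (\<phi>s + t *\<^sub>R axis a 1)) differentiable (at 0)" for a
    using has_vector_derivative_mexp_lincomb_axis by (rule differentiableI_vector)
  have skew: "dagger (lincomb Y \<phi>s) = - lincomb Y \<phi>s"
    using span range_lincomb[of Y] by (auto simp: su_def)
  have Omega_Inr: "Omega ?V ?v (Inr a) = Omega ?U \<phi>s a" for a
    using Omega_product_Inr[of ?U ?v a ?U] differentiable unitary_mexp(1)[OF skew] by (simp add: v)
  have "Omega ?V ?v i \<in> span (range (Omega ?U \<phi>s))" for i
  proof (cases i)
    case (Inl a)
    then show ?thesis
      using Omega_product_Inl[of ?U ?v a ?U] differentiable
        conj_in_span_Omega_mexp_lincomb[OF span span_base[OF rangeI]]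
      by (simp add: v)
  next
    case (Inr a)
    then show ?thesis
      by (simp add: Omega_Inr span_base)
  qed
  then have "span (range (Omega ?V ?v)) \<subseteq> span (range (Omega ?U \<phi>s))"
    by (intro span_minimal[OF _ subspace_span]) blast
  moreover have "range (Omega ?U \<phi>s) = Omega ?V ?v ` range Inr"
    by (simp add: image_image Omega_Inr)
  then have "span (range (Omega ?U \<phi>s)) \<subseteq> span (range (Omega ?V ?v))"
    by (intro span_mono) blast
  ultimately have "span (range (Omega ?V ?v)) = span (range (Omega ?U \<phi>s))"
    by (rule subset_antisym)
  with singular show ?thesis
    by (simp add: singular_point_def)
qed

theorem lemma3:
  fixes X :: "'m::finite \<Rightarrow> complex^'n::finite^'n"
    and Y :: "'k::finite \<Rightarrow> complex^'n^'n"
  assumes "CARD('n) \<ge> 2"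
  shows
   "((\<forall>j. X j \<in> su) \<and> span (range X) = su \<and> CARD('m) > CARD('n)^2 - 1
       \<longrightarrow> \<not> locally_surjective (\<lambda>\<theta>. mexp (lincomb X \<theta>))
           \<and> (\<exists>\<theta>. singular_point (\<lambda>\<theta>. mexp (lincomb X \<theta>)) \<theta>))
    \<and>
    ((\<forall>j. Y j \<in> su) \<and> inj Y \<and> independent (range Y) \<and> span (range Y) = su
       \<longrightarrow> (\<forall>\<phi>s. singular_point (\<lambda>\<phi>. mexp (lincomb Y \<phi>)) \<phi>s
            \<longrightarrow> singular_point
                  (\<lambda>v::real^('k + 'k). mexp (lincomb Y (\<chi> i. v $ Inl i))
                                        ** mexp (lincomb Y (\<chi> i. v $ Inr i)))
                  (\<chi> i. case i of Inl a \<Rightarrow> \<phi>s $ a | Inr a \<Rightarrow> \<phi>s $ a)))"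
proof (intro conjI impI allI)
  assume "(\<forall>j. X j \<in> su) \<and> span (range X) = su \<and> CARD('m) > CARD('n)^2 - 1"
  then obtain \<theta> where "singular_point (\<lambda>\<theta>. mexp (lincomb X \<theta>)) \<theta>"
    using exists_singular_point_mexp_lincomb[OF assms] by blast
  then show "\<not> locally_surjective (\<lambda>\<theta>. mexp (lincomb X \<theta>))"
    and "\<exists>\<theta>. singular_point (\<lambda>\<theta>. mexp (lincomb X \<theta>)) \<theta>"
    unfolding locally_surjective_def by blast+
next
  fix \<phi>s
  assume "(\<forall>j. Y j \<in> su) \<and> inj Y \<and> independent (range Y) \<and> span (range Y) = su"
    and "singular_point (\<lambda>\<phi>. mexp (lincomb Y \<phi>)) \<phi>s"
  then show "singular_point
                  (\<lambda>v::real^('k + 'k). mexp (lincomb Y (\<chi> i. v $ Inl i))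
                                        ** mexp (lincomb Y (\<chi> i. v $ Inr i)))
                  (\<chi> i. case i of Inl a \<Rightarrow> \<phi>s $ a | Inr a \<Rightarrow> \<phi>s $ a)"
    using singular_point_mexp_lincomb_product by blast
qed

end
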